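(* Let $q$ be a prime power, $k\ge 1$ and $t\ge 0$ integers. Suppose there exists an $[n,k]_q$ MWS code with $n<q^t$. Then there exists an $[N,k+1]_q$ MWS code with $N<q^{t+k+1}$.
   Context: An $[n,k]_q$ code is a $k$-dimensional subspace of $\mathbb{F}_q^n$ (non-degenerate, i.e. no coordinate identically zero on the code, when $k\ge2$). It is MWS if the set of its non-zero Hamming weights has cardinality $\frac{q^k-1}{q-1}$. *)

theory Defs
  imports Main HOL.Vector_Spaces "HOL-Library.Function_Algebras" "HOL-Library.Cardinality"
begin

text \<open>Vectors of F_q^n are modelled as functions nat => 'a vanishing outside {..<n};
  'a is a finite field, so q = CARD('a) is automatically a prime power.\<close>

definition cscale :: "'a::field \<Rightarrow> (nat \<Rightarrow> 'a) \<Rightarrow> (nat \<Rightarrow> 'a)" where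
  "cscale c v = (\<lambda>i. c * v i)"

interpretation fvs: vector_space "cscale :: 'a::field \<Rightarrow> (nat \<Rightarrow> 'a) \<Rightarrow> (nat \<Rightarrow> 'a)"
  by unfold_locales (auto simp: cscale_def fun_eq_iff algebra_simps)

definition ambient :: "nat \<Rightarrow> (nat \<Rightarrow> 'a::zero) set" where
  "ambient n = {v. \<forall>i\<ge>n. v i = 0}"

definition hweight :: "nat \<Rightarrow> (nat \<Rightarrow> 'a::zero) \<Rightarrow> nat" where
  "hweight n v = card {i. i < n \<and> v i \<noteq> 0}"

definition is_code :: "nat \<Rightarrow> nat \<Rightarrow> (nat \<Rightarrow> 'a::field) set \<Rightarrow> bool" where
  "is_code n k C \<longleftrightarrow> C \<subseteq> ambient n \<and> fvs.subspace C \<and> fvs.dim C = k \<and>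
     (k \<ge> 2 \<longrightarrow> (\<forall>i<n. \<exists>v\<in>C. v i \<noteq> 0))"

text \<open>MWS: the number of distinct non-zero weights is (q^k-1)/(q-1) (an exact division).\<close>
definition is_MWS :: "nat \<Rightarrow> nat \<Rightarrow> (nat \<Rightarrow> 'a::{finite,field}) set \<Rightarrow> bool" where
  "is_MWS n k C \<longleftrightarrow> is_code n k C \<and>
     card ({hweight n v | v. v \<in> C} - {0}) = (CARD('a) ^ k - 1) div (CARD('a) - 1)"

end

theory Submission
  imports Defs "HOL-Library.FuncSet"
begin

text \<open>
  Fix a basis \<open>b 0, \<dots>, b (k - 1)\<close> of the MWS code \<open>C\<close>, with coordinate functionals
  \<open>coord j\<close>, and a bijection \<open>\<sigma>\<close> from \<open>F\<^sub>q\<close> onto \<open>{0, \<dots>, q - 1}\<close>. The new code \<open>D\<close>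
  consists of the words \<open>extend y a\<close> (\<open>y \<in> C\<close>, \<open>a \<in> F\<^sub>q\<close>): the support coordinates of \<open>y\<close>,
  followed by \<open>q ^ t\<close> copies of a block that has, for all \<open>j < k\<close> and \<open>s \<in> F\<^sub>q\<close>,
  \<open>q ^ j * \<sigma> s\<close> coordinates equal to \<open>coord j y - s * a\<close>, and \<open>q ^ k\<close> further coordinates
  equal to \<open>a\<close>. As \<open>wt y < q ^ t\<close>, the weight of \<open>extend y a\<close> is \<open>wt y\<close> plus \<open>q ^ t\<close> times
  the weight of the block, and both summands can be read off from it.

  For \<open>a = 0\<close> the block weight is at most the number \<open>E\<close> of digit coordinates, and two such
  words have equal weight iff \<open>wt y = wt y'\<close>, because in an MWS code codewords of equal
  weight are proportional. For \<open>a = 1\<close> the block weight is \<open>E + q ^ k\<close> minus the base-\<open>q\<close>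
  number with digits \<open>\<sigma> (coord j y)\<close>, so it exceeds \<open>E\<close> and is injective in \<open>y\<close>. Scaling
  reduces \<open>a \<noteq> 0\<close> to \<open>a = 1\<close>, hence \<open>D\<close> has \<open>(q ^ k - 1) / (q - 1) + q ^ k\<close> nonzero weights.
  Its length is less than \<open>q ^ t * (E + q ^ k + 1) \<le> q ^ (t + k + 1)\<close>, as \<open>2 E = q (q ^ k - 1)\<close>.
\<close>

lemma power_minus_one_eq_sum:
  fixes q :: nat
  assumes "q \<ge> 1"
  shows "q ^ k - 1 = (q - 1) * (\<Sum>i<k. q ^ i)"
proof -
  have "int (q ^ k - 1) = int q ^ k - 1"
    using assms by (simp add: of_nat_diff)
  also have "\<dots> = (int q - 1) * (\<Sum>i<k. int q ^ i)"
    by (rule power_diff_1_eq)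
  also have "\<dots> = int ((q - 1) * (\<Sum>i<k. q ^ i))"
    using assms by (simp add: of_nat_diff)
  finally show ?thesis
    by (simp only: of_nat_eq_iff)
qed

lemma power_minus_one_div_eq_sum:
  fixes q :: nat
  assumes "q \<ge> 2"
  shows "(q ^ k - 1) div (q - 1) = (\<Sum>i<k. q ^ i)"
  using power_minus_one_eq_sum[of q k] assms by simp

lemma sum_power_digits_less:
  fixes q :: nat
  assumes "\<forall>j<k. d j < q"
  shows "(\<Sum>j<k. q ^ j * d j) < q ^ k"
  using assms
proof (induction k)
  case 0
  then show ?case by simp
next
  case (Suc k)
  then have IH: "(\<Sum>j<k. q ^ j * d j) < q ^ k" and "d k + 1 \<le> q"
    by auto
  have "(\<Sum>j<Suc k. q ^ j * d j) < q ^ k * (d k + 1)"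
    using IH by simp
  also have "\<dots> \<le> q ^ k * q"
    using \<open>d k + 1 \<le> q\<close> by (rule mult_le_mono2)
  finally show ?case
    by (simp add: mult.commute)
qed

lemma sum_power_digits_inject:
  fixes q :: nat
  assumes "\<forall>j<k. d j < q" and "\<forall>j<k. d' j < q"
    and "(\<Sum>j<k. q ^ j * d j) = (\<Sum>j<k. q ^ j * d' j)"
  shows "\<forall>j<k. d j = d' j"
  using assms
proof (induction k)
  case 0
  then show ?case by simp
next
  case (Suc k)
  let ?S = "\<Sum>j<k. q ^ j * d j" and ?S' = "\<Sum>j<k. q ^ j * d' j"
  have less: "?S < q ^ k" "?S' < q ^ k"
    using Suc.prems by (auto intro!: sum_power_digits_less)
  have eq: "?S + q ^ k * d k = ?S' + q ^ k * d' k"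
    using Suc.prems(3) by simp
  have "q ^ k > 0"
    using less by linarith
  then have "d k = (?S + q ^ k * d k) div q ^ k" "d' k = (?S' + q ^ k * d' k) div q ^ k"
    using less by simp_all
  then have "d k = d' k"
    using eq by simp
  moreover have "\<forall>j<k. d j = d' j"
    using Suc.IH Suc.prems eq \<open>d k = d' k\<close> by simp
  ultimately show ?case
    by (simp add: less_Suc_eq)
qed

lemma two_times_sum_lessThan: "2 * (\<Sum>i<q. i) = q * (q - 1 :: nat)"
  by (induction q) (auto simp: algebra_simps)

definition label_enum :: "'l set \<Rightarrow> nat \<Rightarrow> 'l" where
  "label_enum L = (SOME h. bij_betw h {..<card L} L)"

definition embed_labels :: "'l set \<Rightarrow> ('l \<Rightarrow> 'a::zero) \<Rightarrow> nat \<Rightarrow> 'a" where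
  "embed_labels L f p = (if p < card L then f (label_enum L p) else 0)"

lemma bij_betw_label_enum:
  assumes "finite L"
  shows "bij_betw (label_enum L) {..<card L} L"
proof -
  have "\<exists>h. bij_betw h {..<card L} L"
    using ex_bij_betw_nat_finite[OF assms] by (simp add: atLeast0LessThan)
  then show ?thesis
    unfolding label_enum_def by (rule someI_ex)
qed

lemma label_enum_in: "finite L \<Longrightarrow> p < card L \<Longrightarrow> label_enum L p \<in> L"
  using bij_betw_label_enum by (blast dest: bij_betwE)

lemma embed_labels_in_ambient: "embed_labels L f \<in> ambient (card L)"
  by (simp add: ambient_def embed_labels_def)

lemma embed_labels_add:
  "embed_labels L (\<lambda>l. f l + g l) = embed_labels L f + embed_labels L (g :: 'l \<Rightarrow> 'a::monoid_add)"
  by (rule ext) (simp add: embed_labels_def)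

lemma embed_labels_mult: "embed_labels L (\<lambda>l. c * f l) = cscale c (embed_labels L f)"
  by (simp add: embed_labels_def cscale_def fun_eq_iff)

lemma hweight_embed_labels:
  assumes "finite L"
  shows "hweight (card L) (embed_labels L f) = card {l \<in> L. f l \<noteq> 0}"
proof -
  have "{p. p < card L \<and> embed_labels L f p \<noteq> 0} = {p \<in> {..<card L}. f (label_enum L p) \<noteq> 0}"
    by (auto simp: embed_labels_def)
  moreover have "bij_betw (label_enum L) {p \<in> {..<card L}. f (label_enum L p) \<noteq> 0} {l \<in> L. f l \<noteq> 0}"
    using bij_betw_label_enum[OF assms] by (rule bij_betw_Collect) blast
  ultimately show ?thesis
    unfolding hweight_def by (simp add: bij_betw_same_card)
qed

lemma embed_labels_eqD:
  assumes "finite L" "embed_labels L f = embed_labels L g" "l \<in> L"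
  shows "f l = g l"
proof -
  have "l \<in> label_enum L ` {..<card L}"
    using bij_betw_imp_surj_on[OF bij_betw_label_enum[OF assms(1)]] assms(3) by simp
  then obtain p where "p < card L" "label_enum L p = l"
    by auto
  then show ?thesis
    using fun_cong[OF assms(2), of p] by (simp add: embed_labels_def)
qed

lemma card_Plus_filter:
  assumes "finite A" "finite B"
  shows "card {e \<in> A <+> B. P e} = card {x \<in> A. P (Inl x)} + card {y \<in> B. P (Inr y)}"
proof -
  have "{e \<in> A <+> B. P e} = {x \<in> A. P (Inl x)} <+> {y \<in> B. P (Inr y)}"
    by auto
  then show ?thesis
    using assms by (simp add: card_Plus)
qed

lemma finite_ambient: "finite (ambient n :: (nat \<Rightarrow> 'a::{finite,zero}) set)"
proof (rule finite_subset)
  show "ambient n \<subseteq> {v. \<forall>i. (i \<in> {..<n} \<longrightarrow> v i \<in> UNIV) \<and> (i \<notin> {..<n} \<longrightarrow> v i = 0)}"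
    by (auto simp: ambient_def)
qed (rule finite_set_of_finite_funs; simp)

lemma cscale_apply [simp]: "cscale c v i = c * v i"
  by (simp add: cscale_def)

lemma hweight_cscale: "c \<noteq> 0 \<Longrightarrow> hweight n (cscale c v) = hweight n (v :: nat \<Rightarrow> 'a::field)"
  by (simp add: hweight_def cscale_def)

lemma hweight_le: "hweight n v \<le> n"
  unfolding hweight_def using card_mono[of "{..<n}" "{i. i < n \<and> v i \<noteq> 0}"] by auto

lemma hweight_eq_0_iff: "v \<in> ambient n \<Longrightarrow> hweight n v = 0 \<longleftrightarrow> v = 0"
  by (auto simp: hweight_def ambient_def fun_eq_iff) (metis not_less)

lemma card_span:
  fixes B :: "(nat \<Rightarrow> 'a::{finite,field}) set"
  assumes "finite B" "fvs.independent B"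
  shows "card (fvs.span B) = CARD('a) ^ card B"
proof -
  let ?comb = "\<lambda>u. \<Sum>v\<in>B. cscale (u v) v"
  have "fvs.span B = ?comb ` (B \<rightarrow>\<^sub>E UNIV)"
  proof -
    have "?comb u \<in> ?comb ` (B \<rightarrow>\<^sub>E UNIV)" for u
    proof (rule image_eqI[of _ _ "restrict u B"])
      show "?comb u = ?comb (restrict u B)"
        by (rule sum.cong) auto
    qed simp
    then show ?thesis
      unfolding fvs.span_finite[OF assms(1)] by blast
  qed
  moreover have "inj_on ?comb (B \<rightarrow>\<^sub>E UNIV)"
  proof (rule inj_onI)
    fix u u' assume u: "u \<in> B \<rightarrow>\<^sub>E UNIV" "u' \<in> B \<rightarrow>\<^sub>E UNIV" and eq: "?comb u = ?comb u'"
    have "(\<Sum>v\<in>B. cscale (u v - u' v) v) = ?comb u - ?comb u'"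
      by (simp add: fvs.scale_left_diff_distrib sum_subtractf)
    then have "u v - u' v = 0" if "v \<in> B" for v
      using fvs.independentD[OF assms(2,1) order_refl, of "\<lambda>v. u v - u' v"] that eq by simp
    then show "u = u'"
      using u by (auto intro: PiE_ext)
  qed
  ultimately show ?thesis
    using assms(1) by (simp add: card_image card_funcsetE)
qed

lemma card_subspace:
  fixes S :: "(nat \<Rightarrow> 'a::{finite,field}) set"
  assumes "fvs.subspace S" "finite S"
  shows "card S = CARD('a) ^ fvs.dim S"
proof -
  obtain B where "B \<subseteq> S" "fvs.independent B" "S \<subseteq> fvs.span B" "card B = fvs.dim S"
    by (rule fvs.basis_exists)
  moreover have "fvs.span B = S"
    using calculation assms(1) fvs.span_minimal by blast
  moreover have "finite B"
    using calculation assms(2) finite_subset by blast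
  ultimately show ?thesis
    using card_span[of B] by simp
qed

lemma card_code: "is_code n k (C :: (nat \<Rightarrow> 'a::{finite,field}) set) \<Longrightarrow> card C = CARD('a) ^ k"
  unfolding is_code_def using card_subspace[of C] finite_subset[OF _ finite_ambient] by blast

lemma code_indexed_basis:
  fixes C :: "(nat \<Rightarrow> 'a::{finite,field}) set"
  assumes "is_code n k C"
  obtains b where "fvs.independent (b ` {..<k})" "fvs.span (b ` {..<k}) = C" "inj_on b {..<k}"
proof -
  obtain B where B: "B \<subseteq> C" "fvs.independent B" "C \<subseteq> fvs.span B" "card B = k"
    using fvs.basis_exists assms unfolding is_code_def by metis
  moreover have "finite B"
  proof (rule finite_subset[OF _ finite_ambient])
    show "B \<subseteq> ambient n"
      using B(1) assms by (auto simp: is_code_def)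
  qed
  ultimately obtain b where "bij_betw b {..<k} B"
    using ex_bij_betw_nat_finite atLeast0LessThan by metis
  moreover have "fvs.span B = C"
    using B assms fvs.span_minimal unfolding is_code_def by blast
  ultimately show ?thesis
    using that B(2) by (auto simp: bij_betw_def)
qed

lemma two_le_card_field: "2 \<le> CARD('a::{finite,field})"
proof -
  have "card {0::'a, 1} \<le> CARD('a)"
    by (rule card_mono) auto
  then show ?thesis
    by simp
qed

definition nonzero_multiples :: "(nat \<Rightarrow> 'a::field) \<Rightarrow> (nat \<Rightarrow> 'a) set" where
  "nonzero_multiples z = (\<lambda>c. cscale c z) ` (UNIV - {0})"

lemma card_nonzero_multiples:
  fixes z :: "nat \<Rightarrow> 'a::{finite,field}"
  assumes "z \<noteq> 0"
  shows "card (nonzero_multiples z) = CARD('a) - 1"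
proof -
  obtain i where "z i \<noteq> 0"
    using assms by (auto simp: fun_eq_iff)
  then have "inj (\<lambda>c. cscale c z)"
    by (intro injI) (metis cscale_def mult_right_cancel)
  then show ?thesis
    unfolding nonzero_multiples_def by (simp add: card_image inj_on_subset card_Diff_singleton)
qed

lemma nonzero_multiples_subset:
  assumes "fvs.subspace C" "z \<in> C" "z \<noteq> 0"
  shows "nonzero_multiples z \<subseteq> {x \<in> C - {0}. hweight n x = hweight n z}"
  using assms fvs.subspace_scale by (auto simp: nonzero_multiples_def hweight_cscale)

lemma nonzero_weights_eq:
  "C \<subseteq> ambient n \<Longrightarrow> {hweight n v | v. v \<in> C} - {0} = hweight n ` (C - {0})"
  using hweight_eq_0_iff[of _ n] by auto

lemma MWS_card_nonzero_weights:
  fixes C :: "(nat \<Rightarrow> 'a::{finite,field}) set"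
  assumes "is_MWS n k C"
  shows "card (hweight n ` (C - {0})) = (\<Sum>i<k. CARD('a) ^ i)"
proof -
  have "hweight n ` (C - {0}) = {hweight n v | v. v \<in> C} - {0}"
    using assms nonzero_weights_eq by (auto simp: is_MWS_def is_code_def)
  then show ?thesis
    using assms power_minus_one_div_eq_sum[OF two_le_card_field] by (simp add: is_MWS_def)
qed

lemma MWS_weight_class_eq:
  fixes C :: "(nat \<Rightarrow> 'a::{finite,field}) set"
  assumes MWS: "is_MWS n k C" and y: "y \<in> C" "y \<noteq> 0"
  shows "{x \<in> C - {0}. hweight n x = hweight n y} = nonzero_multiples y"
proof -
  \<comment> \<open>The \<open>(q ^ k - 1) / (q - 1)\<close> weight classes each contain the \<open>q - 1\<close> nonzero
     multiples of any of their members, and together they have only \<open>q ^ k - 1\<close> elements.\<close>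
  define W where "W = hweight n ` (C - {0})"
  define fibre where "fibre w = {x \<in> C - {0}. hweight n x = w}" for w
  have code: "is_code n k C"
    using MWS by (simp add: is_MWS_def)
  then have sub: "fvs.subspace C" and fin: "finite C"
    using finite_subset[OF _ finite_ambient] by (auto simp: is_code_def)
  have fibre_ge: "CARD('a) - 1 \<le> card (fibre w)" if w: "w \<in> W" for w
  proof -
    obtain z where "z \<in> C" "z \<noteq> 0" "w = hweight n z"
      using w by (auto simp: W_def)
    then have "card (nonzero_multiples z) \<le> card (fibre w)"
      using nonzero_multiples_subset[OF sub] fin by (intro card_mono) (auto simp: fibre_def)
    then show ?thesis
      using card_nonzero_multiples[OF \<open>z \<noteq> 0\<close>] by simp
  qed
  have "(\<Sum>w\<in>W. card (fibre w)) = card (C - {0})"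
    unfolding W_def fibre_def using fin by (subst card_UN_disjoint[symmetric]) (auto intro!: arg_cong[where f=card])
  also have "\<dots> = (\<Sum>w\<in>W. CARD('a) - 1)"
    using card_code[OF code] fvs.subspace_0[OF sub] fin MWS_card_nonzero_weights[OF MWS]
      power_minus_one_eq_sum[of "CARD('a)" k]
    by (simp add: W_def card_Diff_singleton)
  finally have "CARD('a) - 1 = card (fibre (hweight n y))"
    by (rule sum_mono_inv[OF sym]) (use fibre_ge y fin in \<open>auto simp: W_def\<close>)
  then show ?thesis
    unfolding fibre_def using nonzero_multiples_subset[OF sub y] card_nonzero_multiples[OF y(2)] fin
    by (intro card_subset_eq[symmetric]) simp_all
qed

locale MWS_extension =
  fixes C :: "(nat \<Rightarrow> 'a::{finite,field}) set" and n k t :: nat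
    and b :: "nat \<Rightarrow> nat \<Rightarrow> 'a" and \<sigma> :: "'a \<Rightarrow> nat"
  assumes MWS: "is_MWS n k C"
    and length_less: "n < CARD('a) ^ t"
    and independent_basis: "fvs.independent (b ` {..<k})"
    and span_basis: "fvs.span (b ` {..<k}) = C"
    and inj_basis: "inj_on b {..<k}"
    and bij_digit: "bij_betw \<sigma> UNIV {..<CARD('a)}"
begin

lemma code: "is_code n k C"
  using MWS by (simp add: is_MWS_def)

lemma subspace_C: "fvs.subspace C"
  using code by (simp add: is_code_def)

lemma finite_C: "finite C"
  using code finite_subset[OF _ finite_ambient] by (auto simp: is_code_def)

definition coord :: "nat \<Rightarrow> (nat \<Rightarrow> 'a) \<Rightarrow> 'a" where
  "coord j y = fvs.representation (b ` {..<k}) y (b j)"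

lemma coord_add: "y \<in> C \<Longrightarrow> y' \<in> C \<Longrightarrow> coord j (y + y') = coord j y + coord j y'"
  using fvs.representation_add[OF independent_basis] span_basis by (simp add: coord_def)

lemma coord_cscale: "y \<in> C \<Longrightarrow> coord j (cscale c y) = c * coord j y"
  using fvs.representation_scale[OF independent_basis] span_basis by (simp add: coord_def)

lemma coord_basis: "j < k \<Longrightarrow> l < k \<Longrightarrow> coord j (b l) = (if j = l then 1 else 0)"
  using fvs.representation_basis[OF independent_basis] inj_basis by (auto simp: coord_def inj_on_def)

lemma coord_inject:
  assumes "y \<in> C" "y' \<in> C" "\<forall>j<k. coord j y = coord j y'"
  shows "y = y'"
proof -
  let ?B = "b ` {..<k}"
  have "fvs.representation ?B y = fvs.representation ?B y'"
  proof
    fix v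
    show "fvs.representation ?B y v = fvs.representation ?B y' v"
    proof (cases "v \<in> ?B")
      case True
      then show ?thesis
        using assms(3) by (auto simp: coord_def)
    next
      case False
      then have "fvs.representation ?B y v = 0" "fvs.representation ?B y' v = 0"
        using fvs.representation_ne_zero by blast+
      then show ?thesis
        by simp
    qed
  qed
  moreover have "(\<Sum>v\<in>?B. cscale (fvs.representation ?B x v) v) = x" if "x \<in> C" for x
    using that span_basis by (intro fvs.sum_representation_eq[OF independent_basis]) auto
  ultimately show ?thesis
    using assms(1,2) by metis
qed

definition support :: "nat set" where
  "support = {i. i < n \<and> (\<exists>v\<in>C. v i \<noteq> 0)}"

definition digit_labels :: "(nat \<times> 'a \<times> nat) set" where
  "digit_labels = (SIGMA j:{..<k}. SIGMA s:UNIV. {..<CARD('a) ^ j * \<sigma> s})"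

definition ext_labels :: "((nat \<times> 'a \<times> nat) + nat) set" where
  "ext_labels = digit_labels <+> {..<CARD('a) ^ k}"

definition labels :: "(nat + ((nat \<times> 'a \<times> nat) + nat) \<times> nat) set" where
  "labels = support <+> ext_labels \<times> {..<CARD('a) ^ t}"

definition ext_value :: "(nat \<times> 'a \<times> nat) + nat \<Rightarrow> (nat \<Rightarrow> 'a) \<Rightarrow> 'a \<Rightarrow> 'a" where
  "ext_value e y a = (case e of Inl (j, s, _) \<Rightarrow> coord j y - s * a | Inr _ \<Rightarrow> a)"

definition label_value :: "nat + ((nat \<times> 'a \<times> nat) + nat) \<times> nat \<Rightarrow> (nat \<Rightarrow> 'a) \<Rightarrow> 'a \<Rightarrow> 'a" where
  "label_value l y a = (case l of Inl i \<Rightarrow> y i | Inr (e, _) \<Rightarrow> ext_value e y a)"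

definition N :: nat where
  "N = card labels"

definition extend :: "(nat \<Rightarrow> 'a) \<Rightarrow> 'a \<Rightarrow> nat \<Rightarrow> 'a" where
  "extend y a = embed_labels labels (\<lambda>l. label_value l y a)"

definition D :: "(nat \<Rightarrow> 'a) set" where
  "D = {extend y a | y a. y \<in> C}"

definition ext_weight :: "(nat \<Rightarrow> 'a) \<Rightarrow> 'a \<Rightarrow> nat" where
  "ext_weight y a = card {e \<in> ext_labels. ext_value e y a \<noteq> 0}"

lemma zero_outside_support: "y \<in> C \<Longrightarrow> i \<notin> support \<Longrightarrow> y i = 0"
  using code by (auto simp: support_def is_code_def ambient_def)

lemma finite_labels: "finite support" "finite digit_labels" "finite ext_labels" "finite labels"
  by (auto simp: support_def digit_labels_def ext_labels_def labels_def)

lemma card_digit_labels: "2 * card digit_labels = CARD('a) * (CARD('a) ^ k - 1)"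
proof -
  have "card digit_labels = (\<Sum>j<k. CARD('a) ^ j * (\<Sum>s\<in>UNIV. \<sigma> s))"
    by (simp add: digit_labels_def card_SigmaI sum_distrib_left)
  also have "(\<Sum>s\<in>UNIV. \<sigma> s) = (\<Sum>i<CARD('a). i)"
    using sum.reindex_bij_betw[OF bij_digit, of "\<lambda>i. i"] by simp
  also have "(\<Sum>j<k. CARD('a) ^ j * (\<Sum>i<CARD('a). i)) = (\<Sum>j<k. CARD('a) ^ j) * (\<Sum>i<CARD('a). i)"
    by (rule sum_distrib_right[symmetric])
  finally have "2 * card digit_labels = (\<Sum>j<k. CARD('a) ^ j) * (2 * (\<Sum>i<CARD('a). i))"
    by simp
  also have "\<dots> = CARD('a) * ((CARD('a) - 1) * (\<Sum>j<k. CARD('a) ^ j))"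
    by (simp add: two_times_sum_lessThan ac_simps)
  finally show ?thesis
    using power_minus_one_eq_sum[of "CARD('a)" k] by simp
qed

lemma card_labels: "N = card support + CARD('a) ^ t * (card digit_labels + CARD('a) ^ k)"
  using finite_labels by (simp add: N_def labels_def ext_labels_def card_Plus card_cartesian_product)

lemma N_less: "N < CARD('a) ^ (t + k + 1)"
proof -
  have "card support \<le> n"
    using card_mono[of "{..<n}" support] by (auto simp: support_def)
  then have "N < CARD('a) ^ t * (card digit_labels + CARD('a) ^ k + 1)"
    using length_less by (simp add: card_labels)
  also have "card digit_labels + CARD('a) ^ k + 1 \<le> CARD('a) ^ (k + 1)"
  proof -
    obtain p where "CARD('a) = p + 2"
      using two_le_card_field by (metis add.commute le_Suc_ex)
    moreover obtain r where "CARD('a) ^ k = r + 1"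
      using le_Suc_ex[of 1 "CARD('a) ^ k"] by auto
    ultimately show ?thesis
      using card_digit_labels by (simp add: algebra_simps)
  qed
  finally show ?thesis
    by (simp add: power_add ac_simps)
qed

lemma hweight_extend:
  assumes "y \<in> C"
  shows "hweight N (extend y a) = hweight n y + CARD('a) ^ t * ext_weight y a"
proof -
  have "hweight N (extend y a) = card {l \<in> labels. label_value l y a \<noteq> 0}"
    unfolding N_def extend_def by (rule hweight_embed_labels[OF finite_labels(4)])
  also have "\<dots> = card {i \<in> support. y i \<noteq> 0}
      + card {x \<in> ext_labels \<times> {..<CARD('a) ^ t}. label_value (Inr x) y a \<noteq> 0}"
    unfolding labels_def using finite_labels by (subst card_Plus_filter) (auto simp: label_value_def)
  also have "{x \<in> ext_labels \<times> {..<CARD('a) ^ t}. label_value (Inr x) y a \<noteq> 0}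
      = {e \<in> ext_labels. ext_value e y a \<noteq> 0} \<times> {..<CARD('a) ^ t}"
    by (auto simp: label_value_def)
  finally have "hweight N (extend y a) = card {i \<in> support. y i \<noteq> 0}
      + card ({e \<in> ext_labels. ext_value e y a \<noteq> 0} \<times> {..<CARD('a) ^ t})" .
  moreover have "{i \<in> support. y i \<noteq> 0} = {i. i < n \<and> y i \<noteq> 0}"
    using assms by (auto simp: support_def)
  ultimately show ?thesis
    by (simp add: hweight_def ext_weight_def card_cartesian_product)
qed

lemma ext_weight_zero_le: "ext_weight y 0 \<le> card digit_labels"
proof -
  have "ext_weight y 0 = card {x \<in> digit_labels. ext_value (Inl x) y 0 \<noteq> 0}"
    unfolding ext_weight_def ext_labels_def using finite_labels
    by (subst card_Plus_filter) (auto simp: ext_value_def)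
  also have "\<dots> \<le> card digit_labels"
    using finite_labels by (intro card_mono) auto
  finally show ?thesis .
qed

lemma card_matching_digit_labels:
  "card {(j, s, r) \<in> digit_labels. coord j y = s} = (\<Sum>j<k. CARD('a) ^ j * \<sigma> (coord j y))"
proof -
  have "{(j, s, r) \<in> digit_labels. coord j y = s}
      = (SIGMA j:{..<k}. SIGMA s:{coord j y}. {..<CARD('a) ^ j * \<sigma> s})"
    by (auto simp: digit_labels_def)
  then show ?thesis
    by (simp add: card_SigmaI)
qed

lemma ext_weight_one:
  "ext_weight y 1 + (\<Sum>j<k. CARD('a) ^ j * \<sigma> (coord j y)) = card digit_labels + CARD('a) ^ k"
proof -
  have finite_filter: "finite {(j, s, r) \<in> digit_labels. P j s}" for P
    by (rule finite_subset[OF _ finite_labels(2)]) auto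
  have "ext_weight y 1 = card {(j, s, r) \<in> digit_labels. coord j y \<noteq> s} + CARD('a) ^ k"
    unfolding ext_weight_def ext_labels_def using finite_labels
    by (subst card_Plus_filter) (auto simp: ext_value_def split_def intro!: arg_cong[where f=card])
  moreover have "card {(j, s, r) \<in> digit_labels. coord j y \<noteq> s}
      + card {(j, s, r) \<in> digit_labels. coord j y = s} = card digit_labels"
    using finite_filter by (subst card_Un_disjoint[symmetric]) (auto intro!: arg_cong[where f=card])
  ultimately show ?thesis
    by (simp add: card_matching_digit_labels)
qed

lemma digit_less: "\<forall>j<k. \<sigma> (coord j y) < CARD('a)"
  using bij_digit by (auto dest: bij_betwE)

lemma ext_weight_one_gt: "card digit_labels < ext_weight y 1"
  using ext_weight_one[of y] sum_power_digits_less[OF digit_less[of y]] by linarith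

lemma ext_weight_one_inject:
  assumes "y \<in> C" "y' \<in> C" "ext_weight y 1 = ext_weight y' 1"
  shows "y = y'"
proof (rule coord_inject[OF assms(1,2)])
  have "\<forall>j<k. \<sigma> (coord j y) = \<sigma> (coord j y')"
    using ext_weight_one[of y] ext_weight_one[of y'] assms(3)
    by (intro sum_power_digits_inject[OF digit_less digit_less]) simp
  then show "\<forall>j<k. coord j y = coord j y'"
    using bij_betw_imp_inj_on[OF bij_digit] by (simp add: inj_eq)
qed

lemma label_value_add:
  "y \<in> C \<Longrightarrow> y' \<in> C \<Longrightarrow> label_value l (y + y') (a + a') = label_value l y a + label_value l y' a'"
  by (auto simp: label_value_def ext_value_def coord_add algebra_simps split: sum.split prod.split)

lemma label_value_mult: "y \<in> C \<Longrightarrow> label_value l (cscale c y) (c * a) = c * label_value l y a"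
  by (auto simp: label_value_def ext_value_def coord_cscale algebra_simps split: sum.split prod.split)

lemma extend_add: "y \<in> C \<Longrightarrow> y' \<in> C \<Longrightarrow> extend (y + y') (a + a') = extend y a + extend y' a'"
  by (simp add: extend_def label_value_add embed_labels_add)

lemma extend_cscale: "y \<in> C \<Longrightarrow> extend (cscale c y) (c * a) = cscale c (extend y a)"
  by (simp add: extend_def label_value_mult embed_labels_mult)

lemma basis_in_C: "j < k \<Longrightarrow> b j \<in> C"
  using fvs.span_base[of "b j" "b ` {..<k}"] span_basis by simp

lemma label_value_nonzero:
  assumes "l \<in> labels"
  shows "\<exists>y\<in>C. \<exists>a. label_value l y a \<noteq> 0"
proof (cases l)
  case (Inl i)
  then obtain v where "v \<in> C" "v i \<noteq> 0"
    using assms by (auto simp: labels_def support_def)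
  then show ?thesis
    using Inl by (auto simp: label_value_def)
next
  case (Inr x)
  then obtain e m where l: "l = Inr (e, m)" "e \<in> ext_labels"
    using assms by (auto simp: labels_def)
  show ?thesis
  proof (cases e)
    case (Inl d)
    then obtain j s r where "e = Inl (j, s, r)" "j < k"
      using l by (auto simp: ext_labels_def digit_labels_def)
    then have "label_value l (b j) 0 \<noteq> 0"
      using l by (simp add: label_value_def ext_value_def coord_basis)
    then show ?thesis
      using basis_in_C \<open>j < k\<close> by blast
  next
    case (Inr r)
    then have "label_value l 0 1 \<noteq> 0"
      using l by (simp add: label_value_def ext_value_def)
    then show ?thesis
      using fvs.subspace_0[OF subspace_C] by blast
  qed
qed

lemma extend_apply: "p < N \<Longrightarrow> extend y a p = label_value (label_enum labels p) y a"
  by (simp add: extend_def embed_labels_def N_def)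

lemma extend_inject:
  assumes "y \<in> C" "y' \<in> C" "extend y a = extend y' a'"
  shows "y = y' \<and> a = a'"
proof
  have value_eq: "label_value l y a = label_value l y' a'" if "l \<in> labels" for l
    using embed_labels_eqD[OF finite_labels(4)] assms(3) that by (simp add: extend_def)
  show "y = y'"
  proof
    fix i
    show "y i = y' i"
      using value_eq[of "Inl i"] zero_outside_support[OF assms(1)] zero_outside_support[OF assms(2)]
      by (cases "i \<in> support") (auto simp: labels_def label_value_def)
  qed
  have "Inr (Inr 0, 0) \<in> labels"
    by (auto simp: labels_def ext_labels_def intro!: InrI)
  then show "a = a'"
    using value_eq by (fastforce simp: label_value_def ext_value_def)
qed

lemma extend_in_D: "y \<in> C \<Longrightarrow> extend y a \<in> D"
  by (auto simp: D_def)

lemma extend_zero: "extend 0 0 = 0"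
proof -
  have "extend 0 0 = extend (cscale 0 0) (0 * 0)"
    by (simp only: fvs.scale_zero_left mult_zero_left)
  also have "\<dots> = cscale 0 (extend 0 0)"
    by (rule extend_cscale[OF fvs.subspace_0[OF subspace_C]])
  also have "\<dots> = 0"
    by (rule fvs.scale_zero_left)
  finally show ?thesis .
qed

lemma subspace_D: "fvs.subspace D"
  unfolding fvs.subspace_def
proof (intro conjI ballI allI)
  show "0 \<in> D"
    using extend_in_D[OF fvs.subspace_0[OF subspace_C], of 0] by (simp add: extend_zero)
next
  fix v w assume "v \<in> D" "w \<in> D"
  then obtain y a y' a' where "v = extend y a" "w = extend y' a'" "y \<in> C" "y' \<in> C"
    by (auto simp: D_def)
  then show "v + w \<in> D"
    using extend_in_D[OF fvs.subspace_add[OF subspace_C]] by (simp flip: extend_add)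
next
  fix c v assume "v \<in> D"
  then obtain y a where "v = extend y a" "y \<in> C"
    by (auto simp: D_def)
  then show "cscale c v \<in> D"
    using extend_in_D[OF fvs.subspace_scale[OF subspace_C]] by (simp flip: extend_cscale)
qed

lemma D_ambient: "D \<subseteq> ambient N"
  using embed_labels_in_ambient by (auto simp: D_def extend_def N_def)

lemma D_nondegenerate: "p < N \<Longrightarrow> \<exists>v\<in>D. v p \<noteq> 0"
  using label_value_nonzero[OF label_enum_in[OF finite_labels(4)]] extend_apply
  by (fastforce simp: D_def N_def)

lemma dim_D: "fvs.dim D = k + 1"
proof -
  have "D = (\<lambda>(y, a). extend y a) ` (C \<times> UNIV)"
    by (auto simp: D_def)
  moreover have "inj_on (\<lambda>(y, a). extend y a) (C \<times> UNIV)"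
    using extend_inject by (auto intro!: inj_onI)
  ultimately have "card D = CARD('a) ^ k * CARD('a)"
    by (simp add: card_image card_cartesian_product card_code[OF code])
  moreover have "card D = CARD('a) ^ fvs.dim D"
    using card_subspace[OF subspace_D] finite_subset[OF D_ambient finite_ambient] by simp
  ultimately have "CARD('a) ^ fvs.dim D = CARD('a) ^ (k + 1)"
    by simp
  moreover have "1 < CARD('a)"
    using two_le_card_field[where 'a='a] by simp
  ultimately show ?thesis
    using power_inject_exp by blast
qed

lemma hweight_extend_div: "y \<in> C \<Longrightarrow> hweight N (extend y a) div CARD('a) ^ t = ext_weight y a"
  and hweight_extend_mod: "y \<in> C \<Longrightarrow> hweight N (extend y a) mod CARD('a) ^ t = hweight n y"
  using hweight_extend hweight_le[of n y] length_less by simp_all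

definition old_weights :: "nat set" where
  "old_weights = (\<lambda>y. hweight N (extend y 0)) ` (C - {0})"

definition new_weights :: "nat set" where
  "new_weights = (\<lambda>y. hweight N (extend y 1)) ` C"

lemma nonzero_weights_D: "hweight N ` (D - {0}) = old_weights \<union> new_weights"
proof (intro equalityI subsetI)
  fix w assume "w \<in> hweight N ` (D - {0})"
  then obtain y a where y: "y \<in> C" and w: "w = hweight N (extend y a)" and "extend y a \<noteq> 0"
    by (auto simp: D_def)
  show "w \<in> old_weights \<union> new_weights"
  proof (cases "a = 0")
    case True
    then have "y \<in> C - {0}"
      using y \<open>extend y a \<noteq> 0\<close> extend_zero by auto
    then show ?thesis
      using w True by (auto simp: old_weights_def)
  next
    case False
    let ?y = "cscale (inverse a) y"
    have "?y \<in> C"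
      using fvs.subspace_scale[OF subspace_C y] .
    moreover have "extend y a = cscale a (extend ?y 1)"
      using extend_cscale[OF \<open>?y \<in> C\<close>, of a 1] False by (simp add: fvs.scale_scale)
    ultimately show ?thesis
      using w False by (auto simp: new_weights_def hweight_cscale)
  qed
next
  have extend_nonzero: "extend y a \<noteq> 0" if "y \<in> C" "y \<noteq> 0 \<or> a \<noteq> 0" for y a
    using extend_inject[OF that(1) fvs.subspace_0[OF subspace_C], of a 0] that(2) extend_zero by auto
  have "hweight N (extend y a) \<in> hweight N ` (D - {0})" if "y \<in> C" "y \<noteq> 0 \<or> a \<noteq> 0" for y a
    using extend_in_D[OF that(1)] extend_nonzero[OF that] by blast
  then show "w \<in> hweight N ` (D - {0})" if "w \<in> old_weights \<union> new_weights" for w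
    using that by (auto simp: old_weights_def new_weights_def)
qed

lemma card_new_weights: "card new_weights = CARD('a) ^ k"
proof -
  have "inj_on (\<lambda>y. hweight N (extend y 1)) C"
    by (rule inj_onI) (metis hweight_extend_div ext_weight_one_inject)
  then show ?thesis
    by (simp add: new_weights_def card_image card_code[OF code])
qed

lemma card_old_weights: "card old_weights = card (hweight n ` (C - {0}))"
proof -
  have "inj_on (\<lambda>w. w mod CARD('a) ^ t) old_weights"
  proof (rule inj_onI)
    fix w w'
    assume "w \<in> old_weights" "w' \<in> old_weights"
      and mod_eq: "w mod CARD('a) ^ t = w' mod CARD('a) ^ t"
    then obtain y y' where y: "y \<in> C" "y \<noteq> 0" "w = hweight N (extend y 0)"
      and y': "y' \<in> C" "y' \<noteq> 0" "w' = hweight N (extend y' 0)"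
      by (auto simp: old_weights_def)
    then have "hweight n y' = hweight n y"
      using mod_eq by (simp add: hweight_extend_mod)
    then have "y' \<in> {x \<in> C - {0}. hweight n x = hweight n y}"
      using y' by simp
    then have "y' \<in> nonzero_multiples y"
      by (simp only: MWS_weight_class_eq[OF MWS y(1,2)])
    then obtain c where "c \<noteq> 0" "y' = cscale c y"
      by (auto simp: nonzero_multiples_def)
    then show "w = w'"
      using extend_cscale[OF y(1), of c 0] y y' by (simp add: hweight_cscale)
  qed
  moreover have "(\<lambda>w. w mod CARD('a) ^ t) ` old_weights = hweight n ` (C - {0})"
    unfolding old_weights_def image_image by (rule image_cong) (auto simp: hweight_extend_mod)
  ultimately show ?thesis
    using card_image by fastforce
qed

lemma old_new_weights_disjoint: "old_weights \<inter> new_weights = {}"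
proof -
  have "hweight N (extend y 0) \<noteq> hweight N (extend y' 1)" if "y \<in> C" "y' \<in> C" for y y'
    using hweight_extend_div[OF that(1), of 0] hweight_extend_div[OF that(2), of 1]
      ext_weight_zero_le[of y] ext_weight_one_gt[of y'] by (metis not_less)
  then show ?thesis
    by (auto simp: old_weights_def new_weights_def)
qed

theorem MWS_D: "is_MWS N (k + 1) D"
proof -
  have "finite old_weights" "finite new_weights"
    by (simp_all add: old_weights_def new_weights_def finite_C)
  then have "card ({hweight N v | v. v \<in> D} - {0}) = card old_weights + card new_weights"
    unfolding nonzero_weights_eq[OF D_ambient] nonzero_weights_D
    using old_new_weights_disjoint by (rule card_Un_disjoint)
  also have "\<dots> = (\<Sum>i<k + 1. CARD('a) ^ i)"
    by (simp add: card_old_weights card_new_weights MWS_card_nonzero_weights[OF MWS])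
  also have "\<dots> = (CARD('a) ^ (k + 1) - 1) div (CARD('a) - 1)"
    by (rule power_minus_one_div_eq_sum[OF two_le_card_field, symmetric])
  finally show ?thesis
    unfolding is_MWS_def is_code_def using D_ambient subspace_D dim_D D_nondegenerate by blast
qed

end

theorem mainTheorem15:
  fixes C :: "(nat \<Rightarrow> 'a::{finite,field}) set" and n k t :: nat
  assumes "k \<ge> 1"
    and "is_MWS n k C"
    and "n < CARD('a) ^ t"
  shows "\<exists>N (D :: (nat \<Rightarrow> 'a) set). is_MWS N (k + 1) D \<and> N < CARD('a) ^ (t + k + 1)"
proof -
  obtain b where "fvs.independent (b ` {..<k})" "fvs.span (b ` {..<k}) = C" "inj_on b {..<k}"
    using code_indexed_basis assms(2) unfolding is_MWS_def by blast
  moreover obtain \<sigma> :: "'a \<Rightarrow> nat" where "bij_betw \<sigma> UNIV {..<CARD('a)}"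
    using ex_bij_betw_finite_nat[of "UNIV :: 'a set"] atLeast0LessThan by auto
  ultimately interpret MWS_extension C n k t b \<sigma>
    using assms(2,3) by unfold_locales
  show ?thesis
    using MWS_D N_less by blast
qed

end
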